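(* Let $n>0$ and $i_1,\dots,i_5\in\{0,1\}$, and suppose $\alpha=i_1^{(n)}i_2^{(n)}i_3^{(n)}i_4^{(n)}i_5^{(n)}\in\mathcal{L}^*(E_{\mathbb{Z}})$. Then $\alpha$ can be written in one and only one of the forms $$i_1^{(n+1)}i_3^{(n+1)}i_5^{(n)}\qquad\text{or}\qquad i_1^{(n)}i_2^{(n+1)}i_4^{(n+1)}.$$
   Context: The two-sided Thue--Morse sequence $\omega=(\omega_k)_{k\in\mathbb{Z}}$ over $\{0,1\}$ is defined by $\omega_0=0$, $\omega_{2^n+j}=1-\omega_j$ for $n\ge0$, $0\le j<2^n$, and $\omega_{-i}=\omega_{i-1}$ for $i\ge1$. $\mathcal{L}^*(E_{\mathbb{Z}})$ denotes the set of finite nonempty words occurring in $\omega$. Blocks $i^{(n)}$: $0^{(0)}=0$, $1^{(0)}=1$, and inductively $0^{(n)}=0^{(n-1)}1^{(n-1)}$, $1^{(n)}=1^{(n-1)}0^{(n-1)}$ (concatenation); $|i^{(n)}|=2^n$. *)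

theory Defs
  imports Main
begin

definition top_exp :: "nat \<Rightarrow> nat" where
  "top_exp k = (GREATEST n. 2 ^ n \<le> k)"

lemma top_exp_props:
  assumes "k > 0"
  shows "2 ^ top_exp k \<le> k"
proof -
  have b: "\<forall>n. 2 ^ n \<le> k \<longrightarrow> n \<le> k"
    by (metis dual_order.trans less_exp less_imp_le)
  have "2 ^ (0::nat) \<le> k" using assms by simp
  then show ?thesis unfolding top_exp_def
    using GreatestI_nat[of "\<lambda>n. 2 ^ n \<le> k" 0 k] b by blast
qed

text \<open>One-sided Thue--Morse: w_0 = 0, w_(2^n + j) = 1 - w_j for 0 \<le> j < 2^n.\<close>
function tm_nat :: "nat \<Rightarrow> nat" where
  "tm_nat k = (if k = 0 then 0 else 1 - tm_nat (k - 2 ^ top_exp k))"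
  by auto
termination
  by (relation "measure id") auto

definition tm :: "int \<Rightarrow> nat" where
  "tm k = (if k \<ge> 0 then tm_nat (nat k) else tm_nat (nat (- k - 1)))"

definition tm_language :: "nat list set" where
  "tm_language = {w. w \<noteq> [] \<and> (\<exists>k::int. \<forall>i < length w. w ! i = tm (k + int i))}"

fun blk :: "nat \<Rightarrow> nat \<Rightarrow> nat list" where
  "blk 0 i = [i]"
| "blk (Suc n) i = blk n i @ blk n (1 - i)"

end

theory Submission
  imports Defs
begin

text \<open>Call a sequence \<open>x :: int \<Rightarrow> nat\<close> paired if it is binary and \<open>x (2j+1) = 1 - x (2j)\<close>
for all \<open>j\<close>. The two-sided Thue--Morse sequence is paired, and so are all its decimations
\<open>j \<mapsto> x (2\<^sup>d j)\<close>. A paired sequence with paired decimation has no alternating factor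
\<open>ababa\<close>, since such a factor would produce three equal consecutive letters in the decimation.
Consequently the image \<open>\<mu>(w)\<close> of a word of length at least 3 under the Thue--Morse morphism
\<open>\<mu>: b \<mapsto> b(1-b)\<close> occurs only at even positions, and then \<open>w\<close> occurs in the decimation.
As \<open>\<alpha> = \<mu>\<^sup>n(i\<^sub>1 i\<^sub>2 i\<^sub>3 i\<^sub>4 i\<^sub>5)\<close>, desubstituting \<open>n\<close> times shows that
\<open>i\<^sub>1\<dots>i\<^sub>5\<close> occurs in such a sequence. Starting at an even position forces
\<open>i\<^sub>2 = 1-i\<^sub>1, i\<^sub>4 = 1-i\<^sub>3\<close>, at an odd one \<open>i\<^sub>3 = 1-i\<^sub>2, i\<^sub>5 = 1-i\<^sub>4\<close>, and both
together would make \<open>i\<^sub>1\<dots>i\<^sub>5\<close> alternate. These two conditions are exactly the two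
factorisations of \<open>\<alpha>\<close>.\<close>

definition paired :: "(int \<Rightarrow> nat) \<Rightarrow> bool" where
  "paired x \<longleftrightarrow> (\<forall>j. x j \<le> 1 \<and> x (2*j+1) = 1 - x (2*j))"

coinductive hereditarily_paired :: "(int \<Rightarrow> nat) \<Rightarrow> bool" where
  "paired x \<Longrightarrow> hereditarily_paired (\<lambda>j. x (2*j)) \<Longrightarrow> hereditarily_paired x"

lemma pairedD:
  assumes "paired x"
  shows "x j \<le> 1" "x (2*j+1) = 1 - x (2*j)"
  using assms unfolding paired_def by blast+

lemma hereditarily_pairedD:
  assumes "hereditarily_paired x"
  shows "paired x" "paired (\<lambda>j. x (2*j))" "hereditarily_paired (\<lambda>j. x (2*j))"
  using assms by (auto elim: hereditarily_paired.cases)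

lemma paired_no_triple:
  assumes "paired y" "y j = y (j+1)" "y (j+1) = y (j+2)"
  shows False
proof (cases "even j")
  case True
  then obtain i where "j = 2*i" by (rule evenE)
  then have "y (j+1) = 1 - y j" using pairedD(2)[OF assms(1), of i] by simp
  then show False using assms(2) by arith
next
  case False
  then obtain i where "j = 2*i+1" by (rule oddE)
  then have "y (j+2) = 1 - y (j+1)" using pairedD(2)[OF assms(1), of "i+1"] by (simp add: algebra_simps)
  then show False using assms(3) by arith
qed

lemma no_alternating_factor:
  assumes "hereditarily_paired x"
    and "x (m+1) = 1 - x m" "x (m+2) = 1 - x (m+1)"
    and "x (m+3) = 1 - x (m+2)" "x (m+4) = 1 - x (m+3)"
  shows False
proof -
  have x: "paired x" and y: "paired (\<lambda>j. x (2*j))" using hereditarily_pairedD[OF assms(1)] by auto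
  note bin = pairedD(1)[OF x]
  have period: "x (m+2) = x m" "x (m+3) = x (m+1)" "x (m+4) = x m"
    using assms(2-5) bin[of m] bin[of "m+1"] by arith+
  show False
  proof (cases "even m")
    case True
    then obtain q where "m = 2*q" by (rule evenE)
    then show False
      using paired_no_triple[OF y, of q] period by (simp add: algebra_simps)
  next
    case False
    then obtain q where q: "m = 2*q+1" by (rule oddE)
    \<comment> \<open>the pair \<open>(2q, 2q+1)\<close> ending at \<open>m\<close> supplies a third copy of \<open>x (m+1)\<close>\<close>
    have "x m = 1 - x (2*q)" using pairedD(2)[OF x, of q] q by simp
    then have "x (2*q) = x (m+1)" using bin[of "2*q"] assms(2) by arith
    then show False
      using paired_no_triple[OF y, of q] period q by (simp add: algebra_simps)
  qed
qed

fun occurs_at :: "nat list \<Rightarrow> (int \<Rightarrow> nat) \<Rightarrow> int \<Rightarrow> bool" where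
  "occurs_at [] x k \<longleftrightarrow> True"
| "occurs_at (b # w) x k \<longleftrightarrow> x k = b \<and> occurs_at w x (k+1)"

lemma occurs_at_iff_nth: "occurs_at w x k \<longleftrightarrow> (\<forall>i < length w. w ! i = x (k + int i))"
proof (induction w arbitrary: k)
  case (Cons b w)
  show ?case
    unfolding occurs_at.simps Cons.IH
    by (auto simp: nth_Cons algebra_simps split: nat.splits)
qed simp

fun tm_morph :: "nat list \<Rightarrow> nat list" where
  "tm_morph [] = []"
| "tm_morph (b # w) = b # (1 - b) # tm_morph w"

lemma length_tm_morph: "length (tm_morph w) = 2 * length w"
  by (induction w) auto

lemma tm_morph_append: "tm_morph (v @ w) = tm_morph v @ tm_morph w"
  by (induction v) auto

lemma tm_morph_funpow_append: "(tm_morph ^^ n) (v @ w) = (tm_morph ^^ n) v @ (tm_morph ^^ n) w"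
  by (induction n) (auto simp: tm_morph_append)

lemma tm_morph_funpow_Nil: "(tm_morph ^^ n) [] = []"
  by (induction n) auto

lemma blk_eq_tm_morph_funpow: "blk n i = (tm_morph ^^ n) [i]"
proof (induction n arbitrary: i)
  case (Suc n)
  have "blk (Suc n) i = (tm_morph ^^ n) ([i] @ [1 - i])"
    by (simp only: blk.simps Suc.IH tm_morph_funpow_append)
  also have "\<dots> = (tm_morph ^^ Suc n) [i]"
    by (simp only: funpow_Suc_right comp_def) simp
  finally show ?case .
qed simp

lemma tm_morph_funpow_Cons: "(tm_morph ^^ n) (b # w) = blk n b @ (tm_morph ^^ n) w"
  using tm_morph_funpow_append[of n "[b]" w] by (simp add: blk_eq_tm_morph_funpow)

lemma length_blk: "length (blk n i) = 2 ^ n"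
  by (induction n arbitrary: i) auto

lemma blk_nth_0: "blk n i ! 0 = i"
  by (induction n arbitrary: i) (simp_all add: nth_append length_blk)

lemma blk_eq_iff: "blk n a = blk n b \<longleftrightarrow> a = b"
  by (metis blk_nth_0)

lemma occurs_at_tm_morph_even:
  assumes "hereditarily_paired x" "occurs_at (tm_morph w) x k" "3 \<le> length w"
  shows "even k"
proof (rule ccontr)
  assume "odd k"
  then obtain q where q: "k = 2*q+1" by (rule oddE)
  obtain a b c v where "w = a # b # c # v"
    using assms(3) by (auto simp: numeral_3_eq_3 Suc_le_length_iff)
  then have "x (k+1) = 1 - x k" "x (k+3) = 1 - x (k+2)"
    using assms(2) by (simp_all add: algebra_simps)
  moreover have "x (k+2) = 1 - x (k+1)" "x (k+4) = 1 - x (k+3)"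
    using pairedD(2)[OF hereditarily_pairedD(1)[OF assms(1)], of "q+1"]
      pairedD(2)[OF hereditarily_pairedD(1)[OF assms(1)], of "q+2"] q
    by (simp_all add: algebra_simps)
  ultimately show False using no_alternating_factor[OF assms(1), of k] by blast
qed

lemma occurs_at_tm_morph_decimate:
  "occurs_at (tm_morph w) x (2*p) \<Longrightarrow> occurs_at w (\<lambda>j. x (2*j)) p"
proof (induction w arbitrary: p)
  case (Cons b w)
  then show ?case using Cons.IH[of "p+1"] by (simp add: algebra_simps)
qed simp

lemma occurs_at_tm_morph_funpow_desubstitute:
  assumes "hereditarily_paired x" "occurs_at ((tm_morph ^^ n) w) x k" "3 \<le> length w"
  shows "\<exists>y p. hereditarily_paired y \<and> occurs_at w y p"
  using assms
proof (induction n arbitrary: w)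
  case (Suc n)
  have "occurs_at ((tm_morph ^^ n) (tm_morph w)) x k"
    using Suc.prems(2) by (simp only: funpow_Suc_right comp_def)
  moreover have "3 \<le> length (tm_morph w)" using Suc.prems(3) by (simp add: length_tm_morph)
  ultimately obtain y p where y: "hereditarily_paired y" "occurs_at (tm_morph w) y p"
    using Suc.IH Suc.prems(1) by blast
  obtain q where "p = 2*q" using occurs_at_tm_morph_even[OF y Suc.prems(3)] by (rule evenE)
  then have "occurs_at w (\<lambda>j. y (2*j)) q" using y(2) occurs_at_tm_morph_decimate by blast
  then show ?case using hereditarily_pairedD(3)[OF y(1)] by blast
qed auto

lemma occurs_at_five_letters:
  assumes "hereditarily_paired y" "occurs_at [a, b, c, d, e] y p"
  shows "(b = 1 - a \<and> d = 1 - c) \<noteq> (c = 1 - b \<and> e = 1 - d)"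
proof -
  have v: "y p = a" "y (p+1) = b" "y (p+2) = c" "y (p+3) = d" "y (p+4) = e"
    using assms(2) by (simp_all add: algebra_simps)
  have y: "\<And>j. y (2*j+1) = 1 - y (2*j)"
    using pairedD(2)[OF hereditarily_pairedD(1)[OF assms(1)]] .
  have "\<not> ((b = 1 - a \<and> d = 1 - c) \<and> (c = 1 - b \<and> e = 1 - d))"
    using no_alternating_factor[OF assms(1), of p] v by auto
  moreover have "(b = 1 - a \<and> d = 1 - c) \<or> (c = 1 - b \<and> e = 1 - d)"
  proof (cases "even p")
    case True
    then obtain q where "p = 2*q" by (rule evenE)
    then show ?thesis using y[of q] y[of "q+1"] v by (simp add: algebra_simps)
  next
    case False
    then obtain q where "p = 2*q+1" by (rule oddE)
    then show ?thesis using y[of "q+1"] y[of "q+2"] v by (simp add: algebra_simps)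
  qed
  ultimately show ?thesis by blast
qed

declare tm_nat.simps[simp del]

lemma top_exp_upper: "k < 2 ^ Suc (top_exp k)"
proof (rule ccontr)
  assume "\<not> k < 2 ^ Suc (top_exp k)"
  then have "Suc (top_exp k) \<le> top_exp k" unfolding top_exp_def
    by (intro Greatest_le_nat[where b=k])
      (auto simp: top_exp_def intro: order.trans[OF less_imp_le[OF less_exp]])
  then show False by simp
qed

lemma top_exp_unique:
  assumes "2^t \<le> k" "k < 2^(Suc t)"
  shows "top_exp k = t"
proof -
  have "0 < k" using assms(1) by (rule less_le_trans[rotated]) simp
  then have "2 ^ top_exp k < (2::nat) ^ Suc t" "2 ^ t < (2::nat) ^ Suc (top_exp k)"
    using top_exp_props[of k] top_exp_upper[of k] assms by linarith+
  then show ?thesis by (simp only: power_strict_increasing_iff[of "2::nat"])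
qed

lemma tm_nat_le_1: "tm_nat k \<le> 1"
  by (subst tm_nat.simps) auto

lemma tm_nat_double: "tm_nat (2*k) = tm_nat k \<and> tm_nat (2*k+1) = 1 - tm_nat k"
proof (induction k rule: less_induct)
  case (less k)
  show ?case
  proof (cases "k = 0")
    case True
    have "top_exp 1 = 0" by (rule top_exp_unique) auto
    then show ?thesis using True by (simp add: tm_nat.simps)
  next
    case False
    define t where "t = top_exp k"
    have b: "2^t \<le> k" "k < 2^Suc t" using top_exp_props top_exp_upper False t_def by auto
    have t: "top_exp (2*k) = Suc t" "top_exp (2*k+1) = Suc t" by (rule top_exp_unique; use b in simp)+
    have k: "tm_nat k = 1 - tm_nat (k - 2^t)" using False t_def by (subst tm_nat.simps) simp
    have IH: "tm_nat (2*(k-2^t)) = tm_nat (k-2^t)" "tm_nat (2*(k-2^t)+1) = 1 - tm_nat (k-2^t)"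
      using less.IH[of "k-2^t"] b False by simp_all
    have "2*k - 2^Suc t = 2*(k-2^t)" "2*k + 1 - 2^Suc t = 2*(k-2^t) + 1"
      using b by (simp_all add: diff_mult_distrib2)
    then have "tm_nat (2*k) = 1 - tm_nat (2*(k-2^t))" "tm_nat (2*k+1) = 1 - tm_nat (2*(k-2^t)+1)"
      using False t by (subst tm_nat.simps; simp)+
    then show ?thesis using IH k tm_nat_le_1[of "k-2^t"] by simp
  qed
qed

lemma tm_le_1: "tm j \<le> 1"
  unfolding tm_def using tm_nat_le_1 by auto

lemma tm_double: "tm (2*j) = (if j \<ge> 0 then tm j else 1 - tm j)"
proof (cases "j \<ge> 0")
  case True
  then have "nat (2*j) = 2 * nat j" by auto
  then show ?thesis using True tm_nat_double[of "nat j"] unfolding tm_def by simp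
next
  case False
  then have "nat (-(2*j)-1) = 2 * nat (-j-1) + 1" by auto
  then show ?thesis using False tm_nat_double[of "nat (-j-1)"] unfolding tm_def by simp
qed

lemma tm_double_Suc: "tm (2*j+1) = 1 - tm (2*j)"
proof (cases "j \<ge> 0")
  case True
  then have "nat (2*j+1) = 2 * nat j + 1" "nat (2*j) = 2 * nat j" by auto
  then show ?thesis using True tm_nat_double[of "nat j"] unfolding tm_def by simp
next
  case False
  then have "nat (-(2*j+1)-1) = 2 * nat (-j-1)" "nat (-(2*j)-1) = 2 * nat (-j-1) + 1" by auto
  then show ?thesis
    using False tm_nat_double[of "nat (-j-1)"] tm_nat_le_1[of "nat (-j-1)"] unfolding tm_def by simp
qed

lemma tm_quadruple: "tm (2*(2*j)) = tm j"
proof (cases "j \<ge> 0")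
  case True
  then show ?thesis using tm_double[of "2*j"] tm_double[of j] by simp
next
  case False
  then show ?thesis using tm_double[of "2*j"] tm_double[of j] tm_le_1[of j] by simp
qed

lemma tm_quadruple_Suc: "tm (2*(2*j+1)) = 1 - tm (2*(2*j))"
proof (cases "j \<ge> 0")
  case True
  then show ?thesis using tm_double[of "2*j+1"] tm_double[of "2*j"] tm_double_Suc[of j] by simp
next
  case False
  then have "tm (2*(2*j+1)) = tm (2*j)" "tm (2*(2*j)) = 1 - tm (2*j)"
    using tm_double[of "2*j+1"] tm_double[of "2*j"] tm_double_Suc[of j] tm_le_1[of "2*j"] by simp_all
  then show ?thesis using tm_le_1[of "2*j"] by simp
qed

lemma hereditarily_paired_tm: "hereditarily_paired tm"
proof -
  \<comment> \<open>on negative indices \<open>tm (2j) = 1 - tm j\<close>, so decimation alternates between two sequences\<close>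
  have "paired tm" unfolding paired_def using tm_le_1 tm_double_Suc by blast
  moreover have "paired (\<lambda>j. tm (2*j))" unfolding paired_def
    using tm_le_1 tm_quadruple_Suc by blast
  moreover have "(\<lambda>j. tm (2*(2*j))) = tm" using tm_quadruple by blast
  ultimately have closed: "\<And>x. x \<in> {tm, \<lambda>j. tm (2*j)} \<Longrightarrow> paired x \<and> (\<lambda>j. x (2*j)) \<in> {tm, \<lambda>j. tm (2*j)}"
    by auto
  show ?thesis
    by (rule hereditarily_paired.coinduct[of "\<lambda>x. x \<in> {tm, \<lambda>j. tm (2*j)}"]) (use closed in auto)
qed

theorem lemma3p4:
  fixes n i1 i2 i3 i4 i5 :: nat and \<alpha> :: "nat list"
  assumes "n > 0"
    and "i1 \<in> {0,1}" "i2 \<in> {0,1}" "i3 \<in> {0,1}" "i4 \<in> {0,1}" "i5 \<in> {0,1}"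
    and "\<alpha> = blk n i1 @ blk n i2 @ blk n i3 @ blk n i4 @ blk n i5"
    and "\<alpha> \<in> tm_language"
  shows "(\<alpha> = blk (Suc n) i1 @ blk (Suc n) i3 @ blk n i5) \<noteq>
         (\<alpha> = blk n i1 @ blk (Suc n) i2 @ blk (Suc n) i4)"
proof -
  have "\<alpha> = (tm_morph ^^ n) [i1, i2, i3, i4, i5]"
    using assms(7) by (simp add: tm_morph_funpow_Cons tm_morph_funpow_Nil)
  moreover obtain k where "occurs_at \<alpha> tm k"
    using assms(8) unfolding tm_language_def occurs_at_iff_nth by blast
  ultimately obtain y p where "hereditarily_paired y" "occurs_at [i1, i2, i3, i4, i5] y p"
    using occurs_at_tm_morph_funpow_desubstitute[OF hereditarily_paired_tm] by fastforce
  then have "(i2 = 1 - i1 \<and> i4 = 1 - i3) \<noteq> (i3 = 1 - i2 \<and> i5 = 1 - i4)"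
    by (rule occurs_at_five_letters)
  moreover have "(\<alpha> = blk (Suc n) i1 @ blk (Suc n) i3 @ blk n i5) \<longleftrightarrow> i2 = 1 - i1 \<and> i4 = 1 - i3"
    "(\<alpha> = blk n i1 @ blk (Suc n) i2 @ blk (Suc n) i4) \<longleftrightarrow> i3 = 1 - i2 \<and> i5 = 1 - i4"
    using assms(7) by (simp_all add: length_blk blk_eq_iff)
  ultimately show ?thesis by auto
qed

end
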